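(* Let $G$ be a simple, biconnected, planar graph of maximum degree at most $k$, and let $\mathcal{T}$ be its SPQR-tree, rooted at a Q-node. Let $\mu$ be a node of $\mathcal{T}$ that is not the root, let $\mu'$ be its parent, and let $\{s,t\}$ be the poles of $\mu$. Then for every $v\in\{s,t\}$, the degree of $v$ in the pertinent graph of $\mu$ is at most $k-2$ if $\mu'$ is a P-node or an R-node, and at most $k-1$ otherwise (i.e., if $\mu'$ is an S-node or a Q-node).
   Context: The SPQR-tree (with Q-nodes) of a biconnected graph $G$ is the standard decomposition tree of $G$ into its triconnected components. Each node $\mu$ has a skeleton graph $\mathrm{skel}(\mu)$: for a Q-node it consists of two parallel edges, one of which (the real edge) is an edge of $G$; for an S-node it is a simple cycle of length at least three; for a P-node it is a bundle of at least three parallel edges between two vertices; for an R-node it is a simple triconnected graph. Non-real skeleton edges are virtual edges; each virtual edge of $\mathrm{skel}(\mu)$ corresponds to a tree neighbour $\mu''$ of $\mu$ and to a twin virtual edge in $\mathrm{skel}(\mu'')$. The leaves are exactly the Q-nodes, one per edge of $G$; no two S-nodes and no two P-nodes are adjacent. When the tree is rooted at a Q-node, every non-root node $\mu$ has exactly one virtual edge (the reference edge) whose twin lies in the skeleton of its parent; the endpoints $s,t$ of the reference edge are the poles of $\mu$. The pertinent graph of $\mu$ is the subgraph of $G$ formed by the real edges of the Q-nodes in the subtree rooted at $\mu$ (equivalently, obtained by recursively replacing the non-reference virtual edges of $\mathrm{skel}(\mu)$ by the skeletons of the corresponding children). *)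

theory Defs
  imports "HOL-Analysis.Analysis"
begin

definition simple_graph :: "'v set \<Rightarrow> 'v set set \<Rightarrow> bool" where
  "simple_graph V E \<longleftrightarrow> finite V \<and>
     (\<forall>e\<in>E. \<exists>x y. x \<noteq> y \<and> x \<in> V \<and> y \<in> V \<and> e = {x, y})"

definition adj :: "'v set set \<Rightarrow> ('v \<times> 'v) set" where
  "adj E = {(x, y). {x, y} \<in> E}"

definition connected_graph :: "'v set \<Rightarrow> 'v set set \<Rightarrow> bool" where
  "connected_graph V E \<longleftrightarrow>
     (\<forall>u\<in>V. \<forall>w\<in>V. (u, w) \<in> (adj {e\<in>E. e \<subseteq> V})\<^sup>*)"

definition degree :: "'v set set \<Rightarrow> 'v \<Rightarrow> nat" where
  "degree E v = card {e\<in>E. v \<in> e}"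

definition biconnected :: "'v set \<Rightarrow> 'v set set \<Rightarrow> bool" where
  "biconnected V E \<longleftrightarrow> card V \<ge> 2 \<and> connected_graph V E \<and>
     (\<forall>v\<in>V. connected_graph (V - {v}) {e\<in>E. v \<notin> e})"

definition triconnected :: "'v set \<Rightarrow> 'v set set \<Rightarrow> bool" where
  "triconnected V E \<longleftrightarrow> finite V \<and> card V \<ge> 4 \<and>
     (\<forall>X\<subseteq>V. card X \<le> 2 \<longrightarrow> connected_graph (V - X) {e\<in>E. e \<inter> X = {}})"

definition cycle_graph :: "'v set \<Rightarrow> 'v set set \<Rightarrow> bool" where
  "cycle_graph V E \<longleftrightarrow> (\<exists>vs. distinct vs \<and> length vs \<ge> 3 \<and> set vs = V \<and>
     E = {{vs ! i, vs ! ((i + 1) mod length vs)} | i. i < length vs})"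

text \<open>Planarity: a drawing in the plane (identified with the complex numbers) with
  vertices as distinct points, edges as arcs joining their endpoints, no edge passing
  through a vertex other than its endpoints, and distinct edges meeting only in
  common endpoints.\<close>
definition planar :: "'v set \<Rightarrow> 'v set set \<Rightarrow> bool" where
  "planar V E \<longleftrightarrow> (\<exists>(p :: 'v \<Rightarrow> complex) (\<gamma> :: 'v set \<Rightarrow> real \<Rightarrow> complex).
     inj_on p V \<and>
     (\<forall>e\<in>E. arc (\<gamma> e) \<and> {pathstart (\<gamma> e), pathfinish (\<gamma> e)} = p ` e \<and>
              path_image (\<gamma> e) \<inter> p ` V = p ` e) \<and>
     (\<forall>e\<in>E. \<forall>e'\<in>E. e \<noteq> e' \<longrightarrow> path_image (\<gamma> e) \<inter> path_image (\<gamma> e') \<subseteq> p ` (e \<inter> e')))"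

definition is_tree :: "'n set \<Rightarrow> 'n set set \<Rightarrow> bool" where
  "is_tree N TE \<longleftrightarrow> finite N \<and> N \<noteq> {} \<and> simple_graph N TE \<and> connected_graph N TE \<and>
     card TE + 1 = card N"

definition parent_rel :: "'n set \<Rightarrow> 'n \<Rightarrow> ('n \<Rightarrow> 'n) \<Rightarrow> ('n \<times> 'n) set" where
  "parent_rel N r par = {(x, par x) | x. x \<in> N \<and> x \<noteq> r}"

definition rooted_at :: "'n set \<Rightarrow> 'n set set \<Rightarrow> 'n \<Rightarrow> ('n \<Rightarrow> 'n) \<Rightarrow> bool" where
  "rooted_at N TE r par \<longleftrightarrow> r \<in> N \<and>
     (\<forall>x\<in>N - {r}. par x \<in> N \<and> {x, par x} \<in> TE) \<and>
     (\<forall>x\<in>N. (x, r) \<in> (parent_rel N r par)\<^sup>*)"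

datatype node_kind = QN | SN | PN | RN

text \<open>Skeleton edges are identifiers of type 'e; SE mu is the edge set of skel(mu),
  ends e the (two) end vertices of e (named by vertices of G), RealE the set of real
  edges. For a virtual edge e of skel(mu), nbr e is the corresponding tree neighbour and
  twin e its twin virtual edge in skel(nbr e).\<close>
definition skverts :: "('n \<Rightarrow> 'e set) \<Rightarrow> ('e \<Rightarrow> 'v set) \<Rightarrow> 'n \<Rightarrow> 'v set" where
  "skverts SE ends \<mu> = \<Union> (ends ` SE \<mu>)"

definition is_SPQR_tree ::
  "'v set \<Rightarrow> 'v set set \<Rightarrow> 'n set \<Rightarrow> 'n set set \<Rightarrow> ('n \<Rightarrow> node_kind) \<Rightarrow>
   ('n \<Rightarrow> 'e set) \<Rightarrow> ('e \<Rightarrow> 'v set) \<Rightarrow> 'e set \<Rightarrow> ('e \<Rightarrow> 'n) \<Rightarrow> ('e \<Rightarrow> 'e) \<Rightarrow> bool" where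
  "is_SPQR_tree V E N TE kind SE ends RealE nbr twin \<longleftrightarrow>
     is_tree N TE \<and>
     (\<forall>\<mu>\<in>N. finite (SE \<mu>)) \<and>
     (\<forall>\<mu>\<in>N. \<forall>\<nu>\<in>N. \<mu> \<noteq> \<nu> \<longrightarrow> SE \<mu> \<inter> SE \<nu> = {}) \<and>
     (\<forall>\<mu>\<in>N. \<forall>e\<in>SE \<mu>. card (ends e) = 2) \<and>
     \<comment> \<open>real edges: exactly one in each Q-node, none elsewhere, in bijection with E\<close>
     RealE \<subseteq> (\<Union>\<mu>\<in>N. SE \<mu>) \<and>
     bij_betw ends RealE E \<and>
     (\<forall>\<mu>\<in>N. kind \<mu> = QN \<longrightarrow> card (SE \<mu>) = 2 \<and> card (SE \<mu> \<inter> RealE) = 1 \<and>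
                              (\<forall>e\<in>SE \<mu>. \<forall>f\<in>SE \<mu>. ends e = ends f)) \<and>
     (\<forall>\<mu>\<in>N. kind \<mu> \<noteq> QN \<longrightarrow> SE \<mu> \<inter> RealE = {}) \<and>
     \<comment> \<open>skeleton shapes\<close>
     (\<forall>\<mu>\<in>N. kind \<mu> = SN \<longrightarrow>
         inj_on ends (SE \<mu>) \<and> cycle_graph (skverts SE ends \<mu>) (ends ` SE \<mu>)) \<and>
     (\<forall>\<mu>\<in>N. kind \<mu> = PN \<longrightarrow>
         card (SE \<mu>) \<ge> 3 \<and> (\<exists>s t. s \<noteq> t \<and> (\<forall>e\<in>SE \<mu>. ends e = {s, t}))) \<and>
     (\<forall>\<mu>\<in>N. kind \<mu> = RN \<longrightarrow>
         inj_on ends (SE \<mu>) \<and> triconnected (skverts SE ends \<mu>) (ends ` SE \<mu>)) \<and>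
     \<comment> \<open>virtual edges correspond to tree neighbours and have twins\<close>
     (\<forall>\<mu>\<in>N. bij_betw nbr (SE \<mu> - RealE) {\<nu>. {\<mu>, \<nu>} \<in> TE}) \<and>
     (\<forall>\<mu>\<in>N. \<forall>e\<in>SE \<mu> - RealE.
         twin e \<in> SE (nbr e) - RealE \<and> nbr (twin e) = \<mu> \<and> ends (twin e) = ends e) \<and>
     \<comment> \<open>no two adjacent S-nodes, no two adjacent P-nodes\<close>
     (\<forall>\<mu>\<in>N. \<forall>\<nu>\<in>N. {\<mu>, \<nu>} \<in> TE \<longrightarrow>
         \<not> (kind \<mu> = SN \<and> kind \<nu> = SN) \<and> \<not> (kind \<mu> = PN \<and> kind \<nu> = PN)) \<and>
     \<comment> \<open>merging the skeletons along twin virtual edges yields G\<close>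
     (\<forall>\<mu>\<in>N. \<forall>e\<in>SE \<mu> - RealE. skverts SE ends \<mu> \<inter> skverts SE ends (nbr e) = ends e) \<and>
     (\<forall>w. connected_graph {\<mu>\<in>N. w \<in> skverts SE ends \<mu>} TE) \<and>
     V = (\<Union>\<mu>\<in>N. skverts SE ends \<mu>)"

definition pertinent_edges ::
  "'n set \<Rightarrow> 'n \<Rightarrow> ('n \<Rightarrow> 'n) \<Rightarrow> ('n \<Rightarrow> 'e set) \<Rightarrow> ('e \<Rightarrow> 'v set) \<Rightarrow> 'e set \<Rightarrow> 'n \<Rightarrow> 'v set set" where
  "pertinent_edges N r par SE ends RealE \<mu> =
     {ends f | f \<nu>. \<nu> \<in> N \<and> (\<nu>, \<mu>) \<in> (parent_rel N r par)\<^sup>* \<and> f \<in> SE \<nu> \<inter> RealE}"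

end

theory Submission
  imports Defs
begin

text \<open>Let p be the parent of \<mu> and v a pole of \<mu>. In skel(p) the vertex v lies on at least
  two skeleton edges, and on at least three if p is a P-node (at least three parallel edges) or an
  R-node (a triconnected skeleton). Apart from the twin of the reference edge of \<mu>, each such
  edge g stands for a part of the tree: p itself if g is real, otherwise the branch of the tree
  behind the neighbour of p that g corresponds to. These parts are pairwise disjoint and disjoint
  from the subtree of \<mu>, and each of them contains a real edge of G at v: entering a neighbouring
  skeleton through a virtual edge at v, the vertex v lies on a further edge of that skeleton, so
  the walk can be continued until it ends in a real edge. This gives one, respectively two, edges
  of G at v outside the pertinent graph of \<mu>.\<close>

section \<open>Neighbours in cycles and triconnected graphs\<close>

definition neighbours :: "'v set set \<Rightarrow> 'v \<Rightarrow> 'v set" where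
  "neighbours E v = {u. u \<noteq> v \<and> {v, u} \<in> E}"

lemma rtrancl_leaves_start:
  assumes "(a, b) \<in> r\<^sup>*" and "a \<noteq> b"
  shows "\<exists>c. c \<noteq> a \<and> (a, c) \<in> r"
  using assms by (induction rule: converse_rtrancl_induct) (auto, metis)

lemma finite_neighbours:
  assumes "finite E"
  shows "finite (neighbours E v)"
proof -
  have "u \<in> (\<lambda>e. the_elem (e - {v})) ` E" if "u \<in> neighbours E v" for u
  proof -
    have "{v, u} \<in> E" and "{v, u} - {v} = {u}"
      using that unfolding neighbours_def by auto
    then show ?thesis
      by (metis image_eqI the_elem_eq)
  qed
  then show ?thesis
    using assms finite_surj by (metis subsetI)
qed

lemma two_neighbours_in_cycle:
  assumes "cycle_graph V E" and "v \<in> V"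
  shows "2 \<le> card (neighbours E v)"
proof -
  obtain vs where vs: "distinct vs" "3 \<le> length vs" "set vs = V"
    and E: "E = {{vs ! i, vs ! ((i + 1) mod length vs)} | i. i < length vs}"
    using assms(1) unfolding cycle_graph_def by blast
  define n where "n = length vs"
  obtain j where j: "j < n" "vs ! j = v"
    using assms(2) vs(3) unfolding n_def by (metis in_set_conv_nth)
  define succ where "succ = (if j + 1 = n then 0 else j + 1)"
  define pred where "pred = (if j = 0 then n - 1 else j - 1)"
  have succ_mod: "(j + 1) mod n = succ" and pred_mod: "(pred + 1) mod n = j"
    using j(1) vs(2) unfolding succ_def pred_def n_def by auto
  have idx: "succ < n" "pred < n" "succ \<noteq> j" "pred \<noteq> j" "succ \<noteq> pred"
    using j(1) vs(2) unfolding succ_def pred_def n_def by auto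
  have "{vs ! i, vs ! ((i + 1) mod n)} \<in> E" if "i < n" for i
    using that unfolding E n_def by auto
  then have "{v, vs ! succ} \<in> E" "{v, vs ! pred} \<in> E"
    using j idx succ_mod pred_mod by (metis insert_commute)+
  moreover have "vs ! succ \<noteq> v" "vs ! pred \<noteq> v" "vs ! succ \<noteq> vs ! pred"
    using vs(1) j idx unfolding n_def by (auto simp: nth_eq_iff_index_eq)
  ultimately have "{vs ! succ, vs ! pred} \<subseteq> neighbours E v"
    unfolding neighbours_def by simp
  moreover have "finite E"
    unfolding E by (simp add: finite_image_set)
  ultimately have "card {vs ! succ, vs ! pred} \<le> card (neighbours E v)"
    by (simp add: card_mono finite_neighbours)
  then show ?thesis
    using \<open>vs ! succ \<noteq> vs ! pred\<close> by simp
qed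

lemma three_neighbours_in_triconnected:
  assumes "triconnected V E" and "finite E" and "v \<in> V"
  shows "3 \<le> card (neighbours E v)"
proof (rule ccontr)
  define X where "X = neighbours E v \<inter> V"
  assume "\<not> 3 \<le> card (neighbours E v)"
  moreover have "card X \<le> card (neighbours E v)"
    unfolding X_def using finite_neighbours[OF assms(2)] by (simp add: card_mono)
  ultimately have "card X \<le> 2"
    by linarith
  have "finite V" "4 \<le> card V"
    using assms(1) by (simp_all add: triconnected_def)
  have "v \<notin> X" "finite X"
    unfolding X_def neighbours_def using \<open>finite V\<close> by auto
  have "\<not> V \<subseteq> insert v X"
  proof
    assume "V \<subseteq> insert v X"
    then have "card V \<le> card (insert v X)"
      using \<open>finite X\<close> by (simp add: card_mono)
    then show False
      using \<open>4 \<le> card V\<close> \<open>card X \<le> 2\<close> \<open>v \<notin> X\<close> \<open>finite X\<close> by simp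
  qed
  then obtain w where w: "w \<in> V" "w \<noteq> v" "w \<notin> X"
    by blast
  have "X \<subseteq> V"
    unfolding X_def by blast
  then have "connected_graph (V - X) {e \<in> E. e \<inter> X = {}}"
    using assms(1) \<open>card X \<le> 2\<close> by (simp add: triconnected_def)
  then have "(v, w) \<in> (adj {e \<in> {e \<in> E. e \<inter> X = {}}. e \<subseteq> V - X})\<^sup>*"
    using assms(3) w \<open>v \<notin> X\<close> unfolding connected_graph_def by simp
  from rtrancl_leaves_start[OF this w(2)[symmetric]]
  obtain u where "u \<noteq> v" "(v, u) \<in> adj {e \<in> {e \<in> E. e \<inter> X = {}}. e \<subseteq> V - X}"
    by blast
  then have "u \<in> X" "u \<notin> X"
    unfolding adj_def X_def neighbours_def by auto
  then show False
    by blast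
qed

lemma finite_edges_of_simple_graph:
  assumes "simple_graph V E"
  shows "finite E"
proof -
  have "E \<subseteq> Pow V"
    using assms unfolding simple_graph_def by auto
  then show ?thesis
    using assms finite_subset unfolding simple_graph_def by auto
qed

section \<open>Rooted trees\<close>

locale rooted_tree =
  fixes N :: "'n set" and TE :: "'n set set" and r :: 'n and par :: "'n \<Rightarrow> 'n"
  assumes tree: "is_tree N TE" and rooted: "rooted_at N TE r par"
begin

abbreviation parent_of :: "('n \<times> 'n) set" where
  "parent_of \<equiv> parent_rel N r par"

definition subtree :: "'n \<Rightarrow> 'n set" where
  "subtree x = {y \<in> N. (y, x) \<in> parent_of\<^sup>*}"

lemma parent_of_iff [simp]: "(x, y) \<in> parent_of \<longleftrightarrow> x \<in> N \<and> x \<noteq> r \<and> y = par x"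
  unfolding parent_rel_def by blast

lemma root_in_nodes: "r \<in> N"
  using rooted unfolding rooted_at_def by blast

lemma parent_in_nodes: "x \<in> N \<Longrightarrow> x \<noteq> r \<Longrightarrow> par x \<in> N"
  and edge_to_parent: "x \<in> N \<Longrightarrow> x \<noteq> r \<Longrightarrow> {x, par x} \<in> TE"
  using rooted unfolding rooted_at_def by blast+

lemma tree_edge_end_in_nodes: "{x, c} \<in> TE \<Longrightarrow> c \<in> N"
  using tree unfolding is_tree_def simple_graph_def by (auto simp: doubleton_eq_iff)

lemma cycle_propagates_to_ancestors:
  assumes "(x, x) \<in> parent_of\<^sup>+" and "(x, y) \<in> parent_of\<^sup>*"
  shows "(y, y) \<in> parent_of\<^sup>+"
  using assms(2)
proof (induction rule: rtrancl_induct)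
  case base
  show ?case using assms(1) .
next
  case (step y z)
  obtain w where "(y, w) \<in> parent_of" and "(w, y) \<in> parent_of\<^sup>*"
    using step.IH by (meson tranclD)
  moreover have "w = z"
    using step.hyps(2) \<open>(y, w) \<in> parent_of\<close> by simp
  ultimately show ?case
    by (meson rtrancl_into_trancl1)
qed

lemma acyclic_parent_of: "acyclic parent_of"
  unfolding acyclic_def
proof
  fix x
  show "(x, x) \<notin> parent_of\<^sup>+"
  proof
    assume cycle: "(x, x) \<in> parent_of\<^sup>+"
    then have "x \<in> N"
      by (auto dest: tranclD)
    then have "(x, r) \<in> parent_of\<^sup>*"
      using rooted unfolding rooted_at_def by blast
    then have "(r, r) \<in> parent_of\<^sup>+"
      by (rule cycle_propagates_to_ancestors[OF cycle])
    then show False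
      by (auto dest: tranclD)
  qed
qed

lemma wf_parent_of: "wf parent_of"
  and wf_converse_parent_of: "wf (parent_of\<inverse>)"
proof -
  have "parent_of \<subseteq> N \<times> N"
    using parent_in_nodes by auto
  then have "finite parent_of"
    using tree finite_subset unfolding is_tree_def by blast
  then show "wf parent_of" "wf (parent_of\<inverse>)"
    using acyclic_parent_of by (auto intro: finite_acyclic_wf finite_acyclic_wf_converse)
qed

lemma in_own_subtree: "x \<in> N \<Longrightarrow> x \<in> subtree x"
  unfolding subtree_def by blast

lemma subtree_subset_nodes: "subtree x \<subseteq> N"
  unfolding subtree_def by blast

lemma subtree_of_child_subset:
  assumes "c \<in> N" and "c \<noteq> r"
  shows "subtree c \<subseteq> subtree (par c)"
  unfolding subtree_def using assms by (auto intro: rtrancl_into_rtrancl)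

lemma parent_notin_subtree:
  assumes "c \<in> N" and "c \<noteq> r"
  shows "par c \<notin> subtree c"
proof
  assume "par c \<in> subtree c"
  then have "(c, c) \<in> parent_of\<^sup>+"
    using assms unfolding subtree_def by (auto intro: rtrancl_into_trancl2)
  then show False
    using acyclic_parent_of unfolding acyclic_def by blast
qed

lemma sibling_not_ancestor:
  assumes "c1 \<noteq> c2" "c2 \<in> N" "c2 \<noteq> r" "par c1 = par c2"
  shows "(c1, c2) \<notin> parent_of\<^sup>*"
proof
  assume "(c1, c2) \<in> parent_of\<^sup>*"
  then obtain c where "(c1, c) \<in> parent_of" and "(c, c2) \<in> parent_of\<^sup>*"
    using assms(1) by (metis converse_rtranclE)
  then have "par c2 \<in> subtree c2"
    using assms parent_in_nodes unfolding subtree_def by auto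
  then show False
    using parent_notin_subtree assms(2,3) by blast
qed

lemma subtrees_of_siblings_disjoint:
  assumes "c1 \<noteq> c2" "c1 \<in> N" "c2 \<in> N" "c1 \<noteq> r" "c2 \<noteq> r" "par c1 = par c2"
  shows "subtree c1 \<inter> subtree c2 = {}"
proof -
  have "(c1, c2) \<notin> parent_of\<^sup>*" and "(c2, c1) \<notin> parent_of\<^sup>*"
    using sibling_not_ancestor assms by metis+
  moreover have "single_valued parent_of"
    by (auto intro: single_valuedI)
  ultimately show ?thesis
    unfolding subtree_def by (blast dest: single_valued_confluent)
qed

lemma tree_edge_cases:
  assumes "{x, c} \<in> TE"
  shows "(c \<noteq> r \<and> par c = x) \<or> (x \<noteq> r \<and> par x = c)"
proof -
  \<comment> \<open>The card N - 1 parent edges are distinct, so they are all of TE.\<close>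
  define parent_edge where "parent_edge y = {y, par y}" for y
  have "inj_on parent_edge (N - {r})"
  proof (rule inj_onI)
    fix a b assume a: "a \<in> N - {r}" and b: "b \<in> N - {r}" and "parent_edge a = parent_edge b"
    then have "a = b \<or> (b = par a \<and> a = par b)"
      unfolding parent_edge_def by (auto simp: doubleton_eq_iff)
    moreover have "(a, a) \<notin> parent_of\<^sup>+"
      using acyclic_parent_of unfolding acyclic_def by blast
    ultimately show "a = b"
      using a b by (metis parent_of_iff DiffE insertI1 trancl.r_into_trancl trancl_into_trancl)
  qed
  moreover have "card TE + 1 = card N" and "finite N"
    using tree unfolding is_tree_def by blast+
  ultimately have "card (parent_edge ` (N - {r})) = card TE"
    using root_in_nodes by (simp add: card_image)
  moreover have "parent_edge ` (N - {r}) \<subseteq> TE"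
    using edge_to_parent unfolding parent_edge_def by blast
  moreover have "finite TE"
    using tree finite_edges_of_simple_graph unfolding is_tree_def by blast
  ultimately have "parent_edge ` (N - {r}) = TE"
    by (simp add: card_subset_eq)
  with assms obtain y where "y \<in> N - {r}" "{x, c} = {y, par y}"
    unfolding parent_edge_def by blast
  then show ?thesis
    by (auto simp: doubleton_eq_iff)
qed

text \<open>For a tree edge {p, c}, the nodes on the side of c when that edge is removed.\<close>
definition branch :: "'n \<Rightarrow> 'n \<Rightarrow> 'n set" where
  "branch p c = (if c \<noteq> r \<and> par c = p then subtree c else N - subtree p)"

lemma branch_subset_nodes: "branch p c \<subseteq> N"
  unfolding branch_def using subtree_subset_nodes by auto

lemma node_notin_branch:
  assumes "p \<in> N" and "c \<in> N"
  shows "p \<notin> branch p c"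
  using assms parent_notin_subtree in_own_subtree unfolding branch_def by auto

lemma branch_of_child: "c \<noteq> r \<Longrightarrow> branch (par c) c = subtree c"
  unfolding branch_def by simp

lemma branches_disjoint:
  assumes "p \<in> N" "{p, c1} \<in> TE" "{p, c2} \<in> TE" "c1 \<noteq> c2"
  shows "branch p c1 \<inter> branch p c2 = {}"
proof -
  have child_side: "subtree c \<inter> (N - subtree p) = {}" if "c \<in> N" "c \<noteq> r" "par c = p" for c
    using subtree_of_child_subset that by blast
  have "c1 \<in> N" "c2 \<in> N"
    using tree_edge_end_in_nodes assms(2,3) by blast+
  then show ?thesis
    using assms tree_edge_cases[OF assms(2)] tree_edge_cases[OF assms(3)]
      subtrees_of_siblings_disjoint child_side
    unfolding branch_def by (auto split: if_splits)
qed

end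

section \<open>SPQR-trees\<close>

locale spqr_tree = rooted_tree N TE r par
  for N :: "'n set" and TE :: "'n set set" and r :: 'n and par :: "'n \<Rightarrow> 'n" +
  fixes V :: "'v set" and E :: "'v set set" and kind :: "'n \<Rightarrow> node_kind"
    and SE :: "'n \<Rightarrow> 'e set" and ends :: "'e \<Rightarrow> 'v set" and RealE :: "'e set"
    and nbr :: "'e \<Rightarrow> 'n" and twin :: "'e \<Rightarrow> 'e"
  assumes spqr: "is_SPQR_tree V E N TE kind SE ends RealE nbr twin"
begin

lemma finite_skeleton: "\<mu> \<in> N \<Longrightarrow> finite (SE \<mu>)"
  using spqr by (simp add: is_SPQR_tree_def)

lemma skeletons_disjoint: "\<mu> \<in> N \<Longrightarrow> \<nu> \<in> N \<Longrightarrow> \<mu> \<noteq> \<nu> \<Longrightarrow> SE \<mu> \<inter> SE \<nu> = {}"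
  using spqr by (simp add: is_SPQR_tree_def)

lemma card_ends: "\<mu> \<in> N \<Longrightarrow> g \<in> SE \<mu> \<Longrightarrow> card (ends g) = 2"
  using spqr by (simp add: is_SPQR_tree_def)

lemma real_edges_in_skeletons: "RealE \<subseteq> (\<Union>\<mu>\<in>N. SE \<mu>)"
  using spqr by (simp add: is_SPQR_tree_def)

lemma bij_betw_real_edges: "bij_betw ends RealE E"
  using spqr by (simp add: is_SPQR_tree_def)

lemma Q_skeleton:
  assumes "\<mu> \<in> N" and "kind \<mu> = QN"
  shows "card (SE \<mu>) = 2" and "card (SE \<mu> \<inter> RealE) = 1"
    and "g \<in> SE \<mu> \<Longrightarrow> h \<in> SE \<mu> \<Longrightarrow> ends g = ends h"
proof -
  have "\<forall>\<mu>\<in>N. kind \<mu> = QN \<longrightarrow> card (SE \<mu>) = 2 \<and> card (SE \<mu> \<inter> RealE) = 1 \<and>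
      (\<forall>e\<in>SE \<mu>. \<forall>f\<in>SE \<mu>. ends e = ends f)"
    using spqr unfolding is_SPQR_tree_def by (elim conjE)
  then show "card (SE \<mu>) = 2" and "card (SE \<mu> \<inter> RealE) = 1"
    and "g \<in> SE \<mu> \<Longrightarrow> h \<in> SE \<mu> \<Longrightarrow> ends g = ends h"
    using assms by blast+
qed

lemma no_real_edge_outside_Q: "\<mu> \<in> N \<Longrightarrow> kind \<mu> \<noteq> QN \<Longrightarrow> SE \<mu> \<inter> RealE = {}"
  using spqr by (simp add: is_SPQR_tree_def)

lemma S_skeleton: "\<mu> \<in> N \<Longrightarrow> kind \<mu> = SN \<Longrightarrow> cycle_graph (skverts SE ends \<mu>) (ends ` SE \<mu>)"
  using spqr by (simp add: is_SPQR_tree_def)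

lemma P_skeleton:
  assumes "\<mu> \<in> N" and "kind \<mu> = PN"
  shows "3 \<le> card (SE \<mu>)" and "\<exists>s t. \<forall>g\<in>SE \<mu>. ends g = {s, t}"
proof -
  have "\<forall>\<mu>\<in>N. kind \<mu> = PN \<longrightarrow>
      card (SE \<mu>) \<ge> 3 \<and> (\<exists>s t. s \<noteq> t \<and> (\<forall>e\<in>SE \<mu>. ends e = {s, t}))"
    using spqr unfolding is_SPQR_tree_def by (elim conjE)
  then show "3 \<le> card (SE \<mu>)" and "\<exists>s t. \<forall>g\<in>SE \<mu>. ends g = {s, t}"
    using assms by blast+
qed

lemma R_skeleton: "\<mu> \<in> N \<Longrightarrow> kind \<mu> = RN \<Longrightarrow> triconnected (skverts SE ends \<mu>) (ends ` SE \<mu>)"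
  using spqr by (simp add: is_SPQR_tree_def)

lemma bij_betw_virtual_edges_neighbours:
  "\<mu> \<in> N \<Longrightarrow> bij_betw nbr (SE \<mu> - RealE) {\<nu>. {\<mu>, \<nu>} \<in> TE}"
  using spqr by (simp add: is_SPQR_tree_def)

lemma twin_edge:
  assumes "\<mu> \<in> N" and "g \<in> SE \<mu> - RealE"
  shows "twin g \<in> SE (nbr g) - RealE" and "nbr (twin g) = \<mu>" and "ends (twin g) = ends g"
  using spqr assms by (simp_all add: is_SPQR_tree_def)

lemma vertices_are_skeleton_vertices: "V = (\<Union>\<mu>\<in>N. skverts SE ends \<mu>)"
  using spqr by (simp add: is_SPQR_tree_def)

lemma nbr_inj:
  assumes "\<mu> \<in> N" "g \<in> SE \<mu> - RealE" "h \<in> SE \<mu> - RealE" "nbr g = nbr h"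
  shows "g = h"
  using assms bij_betw_virtual_edges_neighbours unfolding bij_betw_def by (meson inj_onD)

lemma virtual_edge_to_neighbour:
  assumes "\<mu> \<in> N" and "g \<in> SE \<mu> - RealE"
  shows "{\<mu>, nbr g} \<in> TE" and "nbr g \<in> N"
proof -
  show "{\<mu>, nbr g} \<in> TE"
    using assms bij_betw_virtual_edges_neighbours bij_betwE by blast
  then show "nbr g \<in> N"
    by (rule tree_edge_end_in_nodes)
qed

definition skel_edges_at :: "'n \<Rightarrow> 'v \<Rightarrow> 'e set" where
  "skel_edges_at \<mu> v = {g \<in> SE \<mu>. v \<in> ends g}"

lemma card_neighbours_le_card_skel_edges_at:
  assumes "\<mu> \<in> N"
  shows "card (neighbours (ends ` SE \<mu>) v) \<le> card (skel_edges_at \<mu> v)"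
proof -
  have fin: "finite (skel_edges_at \<mu> v)"
    using finite_skeleton[OF assms] unfolding skel_edges_at_def by simp
  have "neighbours (ends ` SE \<mu>) v \<subseteq> (\<Union>g\<in>skel_edges_at \<mu> v. ends g - {v})"
  proof
    fix u
    assume "u \<in> neighbours (ends ` SE \<mu>) v"
    then obtain g where "g \<in> SE \<mu>" "ends g = {v, u}" "u \<noteq> v"
      unfolding neighbours_def by auto
    then show "u \<in> (\<Union>g\<in>skel_edges_at \<mu> v. ends g - {v})"
      unfolding skel_edges_at_def by auto
  qed
  moreover have "finite (\<Union>g\<in>skel_edges_at \<mu> v. ends g - {v})"
    using fin card_ends[OF assms] unfolding skel_edges_at_def by (auto intro: card_ge_0_finite)
  ultimately have "card (neighbours (ends ` SE \<mu>) v) \<le> card (\<Union>g\<in>skel_edges_at \<mu> v. ends g - {v})"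
    by (rule card_mono[rotated])
  also have "\<dots> \<le> (\<Sum>g\<in>skel_edges_at \<mu> v. card (ends g - {v}))"
    using fin by (rule card_UN_le)
  also have "\<dots> = card (skel_edges_at \<mu> v)"
    using card_ends[OF assms] unfolding skel_edges_at_def by simp
  finally show ?thesis .
qed

lemma card_skel_edges_at:
  assumes "\<mu> \<in> N" and "t \<in> SE \<mu>" and "v \<in> ends t"
  shows "(if kind \<mu> = PN \<or> kind \<mu> = RN then 3 else 2) \<le> card (skel_edges_at \<mu> v)"
proof -
  have v: "v \<in> skverts SE ends \<mu>"
    using assms unfolding skverts_def by blast
  show ?thesis
  proof (cases "kind \<mu>")
    case QN
    then have "skel_edges_at \<mu> v = SE \<mu>"
      using assms Q_skeleton(3) unfolding skel_edges_at_def by blast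
    then show ?thesis
      using Q_skeleton(1) assms(1) QN by simp
  next
    case PN
    then obtain s t where "\<forall>g\<in>SE \<mu>. ends g = {s, t}"
      using assms(1) P_skeleton(2) by blast
    then have "skel_edges_at \<mu> v = SE \<mu>"
      using assms(2,3) unfolding skel_edges_at_def by auto
    then show ?thesis
      using P_skeleton(1) assms(1) PN by simp
  next
    case SN
    then have "2 \<le> card (neighbours (ends ` SE \<mu>) v)"
      by (rule two_neighbours_in_cycle[OF S_skeleton[OF assms(1)] v])
    then show ?thesis
      using card_neighbours_le_card_skel_edges_at[OF assms(1), of v] SN by simp
  next
    case RN
    have "finite (ends ` SE \<mu>)"
      using finite_skeleton assms(1) by blast
    then have "3 \<le> card (neighbours (ends ` SE \<mu>) v)"
      using three_neighbours_in_triconnected[OF R_skeleton[OF assms(1) RN] _ v] by blast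
    then show ?thesis
      using card_neighbours_le_card_skel_edges_at[OF assms(1), of v] RN by simp
  qed
qed

lemma other_skel_edge_at:
  assumes "\<mu> \<in> N" and "t \<in> SE \<mu>" and "v \<in> ends t"
  obtains g where "g \<in> SE \<mu>" and "g \<noteq> t" and "v \<in> ends g"
proof -
  have "2 \<le> card (skel_edges_at \<mu> v)"
    using card_skel_edges_at[OF assms] by (auto split: if_splits)
  then have "\<not> skel_edges_at \<mu> v \<subseteq> {t}"
    using card_mono[of "{t}" "skel_edges_at \<mu> v"] by auto
  then show ?thesis
    using that unfolding skel_edges_at_def by blast
qed

definition real_edges_at :: "'n set \<Rightarrow> 'v \<Rightarrow> 'e set" where
  "real_edges_at Y v = {f \<in> RealE. v \<in> ends f \<and> (\<exists>y\<in>Y. f \<in> SE y)}"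

lemma real_edges_at_mono: "Y \<subseteq> Y' \<Longrightarrow> real_edges_at Y v \<subseteq> real_edges_at Y' v"
  unfolding real_edges_at_def by blast

lemma real_edges_at_disjoint:
  assumes "Y \<subseteq> N" "Y' \<subseteq> N" "Y \<inter> Y' = {}"
  shows "real_edges_at Y v \<inter> real_edges_at Y' v = {}"
  using assms skeletons_disjoint unfolding real_edges_at_def by blast

lemma finite_real_edges: "finite RealE"
  using real_edges_in_skeletons finite_skeleton tree finite_subset unfolding is_tree_def by blast

lemma finite_real_edges_at: "finite (real_edges_at Y v)"
  using finite_real_edges unfolding real_edges_at_def by simp

lemma real_edges_at_subtree_nonempty:
  assumes "x \<in> N" "x \<noteq> r" "t \<in> SE x - RealE" "nbr t = par x" "v \<in> ends t"
  shows "real_edges_at (subtree x) v \<noteq> {}"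
  using assms
proof (induction x arbitrary: t rule: wf_induct_rule[OF wf_parent_of])
  case (1 x)
  obtain g where g: "g \<in> SE x" "g \<noteq> t" "v \<in> ends g"
    using other_skel_edge_at "1.prems" by blast
  show ?case
  proof (cases "g \<in> RealE")
    case True
    then show ?thesis
      using g in_own_subtree "1.prems"(1) unfolding real_edges_at_def by blast
  next
    case False
    then have g_virtual: "g \<in> SE x - RealE"
      using g(1) by blast
    let ?c = "nbr g"
    have "?c \<noteq> par x"
      using nbr_inj[OF "1.prems"(1) g_virtual "1.prems"(3)] g(2) "1.prems"(4) by metis
    then have c: "?c \<in> N" "?c \<noteq> r" "par ?c = x"
      using tree_edge_cases virtual_edge_to_neighbour[OF "1.prems"(1) g_virtual] by metis+
    have "real_edges_at (subtree ?c) v \<noteq> {}"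
      using "1.IH"[of ?c "twin g"] c g(3) twin_edge[OF "1.prems"(1) g_virtual] by simp
    moreover have "subtree ?c \<subseteq> subtree x"
      using subtree_of_child_subset c by metis
    ultimately show ?thesis
      using real_edges_at_mono by blast
  qed
qed

lemma real_edges_at_child_subtree_nonempty:
  assumes "p \<in> N" "g \<in> SE p - RealE" "nbr g \<noteq> r" "par (nbr g) = p" "v \<in> ends g"
  shows "real_edges_at (subtree (nbr g)) v \<noteq> {}"
  using real_edges_at_subtree_nonempty[of "nbr g" "twin g"] twin_edge[OF assms(1,2)]
    virtual_edge_to_neighbour(2)[OF assms(1,2)] assms(3-5) by simp

lemma real_edges_at_outside_subtree_nonempty:
  assumes "x \<in> N" "x \<noteq> r" "t \<in> SE x - RealE" "nbr t = par x" "v \<in> ends t"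
  shows "real_edges_at (N - subtree x) v \<noteq> {}"
  using assms
proof (induction x arbitrary: t rule: wf_induct_rule[OF wf_converse_parent_of])
  case (1 x)
  let ?p = "par x"
  have p: "?p \<in> N" "?p \<notin> subtree x"
    using parent_in_nodes parent_notin_subtree "1.prems"(1,2) by blast+
  have twin_t: "twin t \<in> SE ?p - RealE" "nbr (twin t) = x" "v \<in> ends (twin t)"
    using twin_edge[OF "1.prems"(1,3)] "1.prems"(4,5) by auto
  obtain g where g: "g \<in> SE ?p" "g \<noteq> twin t" "v \<in> ends g"
    using other_skel_edge_at[OF p(1)] twin_t by blast
  show ?case
  proof (cases "g \<in> RealE")
    case True
    then show ?thesis
      using g p unfolding real_edges_at_def by blast
  next
    case False
    then have g_virtual: "g \<in> SE ?p - RealE"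
      using g(1) by blast
    let ?c = "nbr g"
    have "?c \<noteq> x"
      using nbr_inj[OF p(1) g_virtual twin_t(1)] g(2) twin_t(2) by metis
    have c: "?c \<in> N" "{?p, ?c} \<in> TE"
      using virtual_edge_to_neighbour[OF p(1) g_virtual] by blast+
    from tree_edge_cases[OF c(2)] show ?thesis
    proof
      assume child: "?c \<noteq> r \<and> par ?c = ?p"
      then have "real_edges_at (subtree ?c) v \<noteq> {}"
        using real_edges_at_child_subtree_nonempty[OF p(1) g_virtual] g(3) by blast
      moreover have "subtree ?c \<subseteq> N - subtree x"
        using subtrees_of_siblings_disjoint[OF \<open>?c \<noteq> x\<close>] child c(1) "1.prems"(1,2)
          subtree_subset_nodes by blast
      ultimately show ?thesis
        using real_edges_at_mono by blast
    next
      assume parent: "?p \<noteq> r \<and> par ?p = ?c"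
      then have "real_edges_at (N - subtree ?p) v \<noteq> {}"
        using "1.IH"[of ?p g] p(1) g_virtual g(3) "1.prems"(1,2) by simp
      moreover have "N - subtree ?p \<subseteq> N - subtree x"
        using subtree_of_child_subset "1.prems"(1,2) by blast
      ultimately show ?thesis
        using real_edges_at_mono by blast
    qed
  qed
qed

definition region :: "'n \<Rightarrow> 'e \<Rightarrow> 'n set" where
  "region p g = (if g \<in> RealE then {p} else branch p (nbr g))"

lemma region_subset_nodes: "p \<in> N \<Longrightarrow> region p g \<subseteq> N"
  unfolding region_def using branch_subset_nodes by auto

lemma regions_disjoint:
  assumes "p \<in> N" "g \<in> SE p" "h \<in> SE p" "g \<noteq> h"
  shows "region p g \<inter> region p h = {}"
proof -
  have "p \<notin> region p g" if "g \<in> SE p - RealE" for g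
    using node_notin_branch assms(1) virtual_edge_to_neighbour[OF assms(1) that] that
    unfolding region_def by auto
  moreover have "\<not> (g \<in> RealE \<and> h \<in> RealE)"
  proof
    assume "g \<in> RealE \<and> h \<in> RealE"
    then have "{g, h} \<subseteq> SE p \<inter> RealE" and "kind p = QN"
      using assms(2,3) no_real_edge_outside_Q[OF assms(1)] by blast+
    then show False
      using Q_skeleton(2)[OF assms(1)] assms(4) card_mono[of "SE p \<inter> RealE" "{g, h}"]
        finite_skeleton[OF assms(1)] by simp
  qed
  moreover have "branch p (nbr g) \<inter> branch p (nbr h) = {}" if "g \<notin> RealE" "h \<notin> RealE"
  proof -
    have "g \<in> SE p - RealE" "h \<in> SE p - RealE"
      using assms(2,3) that by blast+
    moreover from this have "nbr g \<noteq> nbr h"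
      using nbr_inj[OF assms(1)] assms(4) by blast
    ultimately show ?thesis
      using branches_disjoint[OF assms(1)] virtual_edge_to_neighbour(1)[OF assms(1)] by blast
  qed
  ultimately show ?thesis
    using assms(2,3) unfolding region_def by (simp split: if_splits)
qed

lemma real_edges_at_region_nonempty:
  assumes "p \<in> N" "g \<in> SE p" "v \<in> ends g"
  shows "real_edges_at (region p g) v \<noteq> {}"
proof (cases "g \<in> RealE")
  case True
  then show ?thesis
    using assms unfolding region_def real_edges_at_def by auto
next
  case False
  then have g_virtual: "g \<in> SE p - RealE"
    using assms(2) by blast
  let ?c = "nbr g"
  have c: "?c \<in> N" "{p, ?c} \<in> TE"
    using virtual_edge_to_neighbour[OF assms(1) g_virtual] by blast+
  from tree_edge_cases[OF c(2)] show ?thesis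
  proof
    assume child: "?c \<noteq> r \<and> par ?c = p"
    then show ?thesis
      using real_edges_at_child_subtree_nonempty[OF assms(1) g_virtual] assms(3) False
      unfolding region_def branch_def by simp
  next
    assume parent: "p \<noteq> r \<and> par p = ?c"
    then have "\<not> (?c \<noteq> r \<and> par ?c = p)"
      using parent_notin_subtree[OF assms(1)] c(1) unfolding subtree_def by auto
    then show ?thesis
      using real_edges_at_outside_subtree_nonempty[of p g] parent assms g_virtual False
      unfolding region_def branch_def by auto
  qed
qed

lemma card_le_real_edges_at_regions:
  assumes "p \<in> N" and "G \<subseteq> skel_edges_at p v"
  shows "card G \<le> card (real_edges_at (\<Union>g\<in>G. region p g) v)"
proof -
  have "real_edges_at (region p g) v \<noteq> {}" if "g \<in> G" for g
    using real_edges_at_region_nonempty[OF assms(1)] assms(2) that unfolding skel_edges_at_def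
    by blast
  then have "\<forall>g\<in>G. \<exists>f. f \<in> real_edges_at (region p g) v"
    by blast
  then have "\<exists>choice. \<forall>g\<in>G. choice g \<in> real_edges_at (region p g) v"
    by (rule bchoice)
  then obtain choice where choice: "\<And>g. g \<in> G \<Longrightarrow> choice g \<in> real_edges_at (region p g) v"
    by blast
  have "inj_on choice G"
  proof (rule inj_onI)
    fix g h assume g: "g \<in> G" and h: "h \<in> G" and "choice g = choice h"
    show "g = h"
    proof (rule ccontr)
      assume "g \<noteq> h"
      then have "region p g \<inter> region p h = {}"
        using regions_disjoint[OF assms(1)] g h assms(2) unfolding skel_edges_at_def by blast
      then have "real_edges_at (region p g) v \<inter> real_edges_at (region p h) v = {}"
        using real_edges_at_disjoint region_subset_nodes[OF assms(1)] by blast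
      moreover have "choice g \<in> real_edges_at (region p g) v \<inter> real_edges_at (region p h) v"
        using choice[OF g] choice[OF h] \<open>choice g = choice h\<close> by simp
      ultimately show False
        by simp
    qed
  qed
  moreover have "choice ` G \<subseteq> real_edges_at (\<Union>g\<in>G. region p g) v"
  proof (rule image_subsetI)
    fix g
    assume "g \<in> G"
    then have "real_edges_at (region p g) v \<subseteq> real_edges_at (\<Union>g\<in>G. region p g) v"
      by (intro real_edges_at_mono) blast
    then show "choice g \<in> real_edges_at (\<Union>g\<in>G. region p g) v"
      using choice[OF \<open>g \<in> G\<close>] by blast
  qed
  ultimately show ?thesis
    using finite_real_edges_at by (rule card_inj_on_le)
qed

lemma degree_pertinent_edges:
  "degree (pertinent_edges N r par SE ends RealE \<mu>) v = card (real_edges_at (subtree \<mu>) v)"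
proof -
  have "{e \<in> pertinent_edges N r par SE ends RealE \<mu>. v \<in> e} = ends ` real_edges_at (subtree \<mu>) v"
    unfolding pertinent_edges_def real_edges_at_def subtree_def by blast
  moreover have "inj_on ends (real_edges_at (subtree \<mu>) v)"
    using bij_betw_real_edges unfolding bij_betw_def real_edges_at_def by (auto intro: inj_on_subset)
  ultimately show ?thesis
    unfolding degree_def by (simp add: card_image)
qed

lemma card_real_edges_at_le_degree: "card (real_edges_at Y v) \<le> degree E v"
proof -
  have "inj_on ends RealE" and "ends ` RealE = E"
    using bij_betw_real_edges unfolding bij_betw_def by blast+
  then have "card (real_edges_at Y v) = card (ends ` real_edges_at Y v)"
    unfolding real_edges_at_def by (auto intro: card_image[symmetric] inj_on_subset)
  also have "\<dots> \<le> card {e \<in> E. v \<in> e}"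
    using \<open>ends ` RealE = E\<close> finite_real_edges
    by (intro card_mono) (auto simp: real_edges_at_def)
  finally show ?thesis
    unfolding degree_def .
qed

lemma card_real_edges_outside_subtree:
  assumes "\<mu> \<in> N" "\<mu> \<noteq> r" "e \<in> SE \<mu> - RealE" "nbr e = par \<mu>" "v \<in> ends e"
  shows "(if kind (par \<mu>) = PN \<or> kind (par \<mu>) = RN then 2 else 1)
           \<le> card (real_edges_at (N - subtree \<mu>) v)"
proof -
  let ?p = "par \<mu>"
  have p: "?p \<in> N"
    using parent_in_nodes assms(1,2) by blast
  have twin_e: "twin e \<in> SE ?p - RealE" "nbr (twin e) = \<mu>" "v \<in> ends (twin e)"
    using twin_edge[OF assms(1,3)] assms(4,5) by auto
  define G where "G = skel_edges_at ?p v - {twin e}"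
  have "twin e \<in> skel_edges_at ?p v" "finite (skel_edges_at ?p v)"
    using twin_e finite_skeleton[OF p] unfolding skel_edges_at_def by auto
  then have "(if kind ?p = PN \<or> kind ?p = RN then 2 else 1) \<le> card G"
    using card_skel_edges_at[OF p, of "twin e" v] twin_e unfolding G_def
    by (auto simp: card_Diff_singleton split: if_splits)
  also have "\<dots> \<le> card (real_edges_at (\<Union>g\<in>G. region ?p g) v)"
    using card_le_real_edges_at_regions[OF p] unfolding G_def by blast
  also have "\<dots> \<le> card (real_edges_at (N - subtree \<mu>) v)"
  proof -
    have "region ?p (twin e) = subtree \<mu>"
      using twin_e branch_of_child[OF assms(2)] unfolding region_def by simp
    then have "(\<Union>g\<in>G. region ?p g) \<subseteq> N - subtree \<mu>"
      using regions_disjoint[OF p _ twin_e(1)[THEN DiffD1]] region_subset_nodes[OF p]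
      unfolding G_def skel_edges_at_def by blast
    then show ?thesis
      using real_edges_at_mono finite_real_edges_at by (metis card_mono)
  qed
  finally show ?thesis .
qed

lemma pertinent_degree_bound:
  assumes "\<mu> \<in> N" "\<mu> \<noteq> r" "e \<in> SE \<mu> - RealE" "nbr e = par \<mu>" "v \<in> ends e"
  shows "degree (pertinent_edges N r par SE ends RealE \<mu>) v
           + (if kind (par \<mu>) = PN \<or> kind (par \<mu>) = RN then 2 else 1) \<le> degree E v"
proof -
  have "card (real_edges_at (subtree \<mu>) v) + card (real_edges_at (N - subtree \<mu>) v)
      = card (real_edges_at (subtree \<mu>) v \<union> real_edges_at (N - subtree \<mu>) v)"
    using real_edges_at_disjoint[OF subtree_subset_nodes] finite_real_edges_at
    by (simp add: card_Un_disjoint)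
  also have "\<dots> \<le> card (real_edges_at N v)"
    using real_edges_at_mono[of _ N v] subtree_subset_nodes finite_real_edges_at
    by (intro card_mono) auto
  also have "\<dots> \<le> degree E v"
    by (rule card_real_edges_at_le_degree)
  finally show ?thesis
    using card_real_edges_outside_subtree[OF assms] degree_pertinent_edges by simp
qed

end

theorem mainTheorem1:
  fixes V :: "'v set" and E :: "'v set set" and k :: nat
    and N :: "'n set" and TE :: "'n set set" and kind :: "'n \<Rightarrow> node_kind"
    and SE :: "'n \<Rightarrow> 'e set" and ends :: "'e \<Rightarrow> 'v set" and RealE :: "'e set"
    and nbr :: "'e \<Rightarrow> 'n" and twin :: "'e \<Rightarrow> 'e"
    and r :: 'n and par :: "'n \<Rightarrow> 'n" and \<mu> :: 'n and e :: 'e and v :: 'v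
  assumes "simple_graph V E" and "biconnected V E" and "planar V E"
    and "\<forall>x\<in>V. degree E x \<le> k"
    and "is_SPQR_tree V E N TE kind SE ends RealE nbr twin"
    and "rooted_at N TE r par" and "kind r = QN"
    and "\<mu> \<in> N" and "\<mu> \<noteq> r"
    and "e \<in> SE \<mu> - RealE" and "nbr e = par \<mu>"
    and "v \<in> ends e"
  shows "int (degree (pertinent_edges N r par SE ends RealE \<mu>) v)
           \<le> (if kind (par \<mu>) = PN \<or> kind (par \<mu>) = RN then int k - 2 else int k - 1)"
proof -
  have "is_tree N TE"
    using assms(5) unfolding is_SPQR_tree_def by (elim conjE)
  then interpret spqr_tree N TE r par V E kind SE ends RealE nbr twin
    using assms(5,6) by unfold_locales
  have "v \<in> V"
    using vertices_are_skeleton_vertices assms(8,10,12) unfolding skverts_def by blast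
  then have "degree E v \<le> k"
    using assms(4) by blast
  then show ?thesis
    using pertinent_degree_bound[OF assms(8-12)] by (simp split: if_splits)
qed

end
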